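(* (i) Every $\mathcal H$-convex function $f:\mathbb R\to\mathbb R_{+\infty}$ is even and lower semicontinuous. (ii) If $C\subset\mathcal H$ is $\mathcal H$-convex and $A\subset\mathbb R^2$ satisfies $C=\{\psi_{a,b}:(a,b)\in A\}$, then $A$ is closed and convex and $A-\mathbb R^2_+\subset A$. (iii) If $A\subset\mathbb R^2$ is closed and convex, $A-\mathbb R^2_+\subset A$, and the function $\sup_{(a,b)\in A}\psi_{a,b}$ is not identically $+\infty$ on $\mathbb R$, then $C=\{\psi_{a,b}:(a,b)\in A\}$ is $\mathcal H$-convex.
   Context: $X=\mathbb R$; $\mathbb R_{+\infty}=\mathbb R\cup\{+\infty\}$. For $a,b\in\mathbb R$, $\phi_a(x)=ax^2$, $\psi_{a,b}(x)=ax^2+b$; $\mathcal L=\{\phi_a:a\in\mathbb R\}$, $\mathcal H=\{\psi_{a,b}:a,b\in\mathbb R\}$. A function $f$ is $\mathcal H$-convex if $f=\sup_{h\in H}h$ pointwise for some $H\subset\mathcal H$. A subset $C\subset\mathcal H$ is $\mathcal H$-convex if for every $h_0\in\mathcal H\setminus C$ there is $x\in\mathbb R$ with $h_0(x)>\sup_{h\in C}h(x)$. $\mathbb R^2_+=\{(a,b):a\ge0,b\ge0\}$ and $A-B=\{u-v:u\in A,v\in B\}$. *)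

theory Defs
  imports "HOL-Analysis.Analysis" "HOL-Library.Extended_Real"
begin

definition psi :: "real \<Rightarrow> real \<Rightarrow> real \<Rightarrow> real" where
  "psi a b = (\<lambda>x. a * x\<^sup>2 + b)"

definition HH :: "(real \<Rightarrow> real) set" where
  "HH = {psi a b | a b. True}"

definition supfun :: "(real \<Rightarrow> real) set \<Rightarrow> real \<Rightarrow> ereal" where
  "supfun H x = (SUP h\<in>H. ereal (h x))"

definition H_convex_fun :: "(real \<Rightarrow> ereal) \<Rightarrow> bool" where
  "H_convex_fun f \<longleftrightarrow> (\<exists>H. H \<subseteq> HH \<and> f = supfun H)"

definition H_convex_set :: "(real \<Rightarrow> real) set \<Rightarrow> bool" where
  "H_convex_set C \<longleftrightarrow> C \<subseteq> HH \<and> (\<forall>h0 \<in> HH - C. \<exists>x. ereal (h0 x) > supfun C x)"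

definition lsc :: "(real \<Rightarrow> ereal) \<Rightarrow> bool" where
  "lsc f \<longleftrightarrow> (\<forall>x. f x \<le> Liminf (at x) f)"

definition nonneg_quadrant :: "(real \<times> real) set" where
  "nonneg_quadrant = {(a, b). a \<ge> 0 \<and> b \<ge> 0}"

definition set_diff_minkowski :: "(real \<times> real) set \<Rightarrow> (real \<times> real) set \<Rightarrow> (real \<times> real) set" where
  "set_diff_minkowski A B = {u - v | u v. u \<in> A \<and> v \<in> B}"

end

theory Submission
  imports Defs
begin

text \<open>
  (i) Every member of \<open>\<H>\<close> is even and continuous, and both properties pass to pointwise
  suprema (continuity only as lower semicontinuity).
  (ii) When \<open>C\<close> is \<open>\<H>\<close>-convex, \<open>A\<close> is the intersection over \<open>x\<close> of the half-planes
  \<open>{(a,b). a x\<^sup>2 + b \<le> sup C (x)}\<close>, each of which is closed, convex and stable under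
  subtracting \<open>\<real>\<^sup>2\<^sub>+\<close>.
  (iii) A point \<open>(a\<^sub>0,b\<^sub>0) \<notin> A\<close> is strictly separated from \<open>A\<close> by a line \<open>u a + v b = \<beta>\<close>, and
  stability under subtracting \<open>\<real>\<^sup>2\<^sub>+\<close> forces \<open>u, v \<ge> 0\<close>. If \<open>v > 0\<close>, evaluating at
  \<open>x = \<surd>(u/v)\<close> turns the separation into \<open>sup C (x) \<le> \<beta>/v < a\<^sub>0 x\<^sup>2 + b\<^sub>0\<close>. If \<open>v = 0\<close>, all
  slopes in \<open>A\<close> lie below some \<open>s < a\<^sub>0\<close>, and finiteness of the supremum at one point lets
  \<open>a\<^sub>0 x\<^sup>2 + b\<^sub>0\<close> overtake it for large \<open>x\<close>.
\<close>

abbreviation psi_set :: "(real \<times> real) set \<Rightarrow> (real \<Rightarrow> real) set" where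
  "psi_set A \<equiv> {psi a b | a b. (a, b) \<in> A}"

lemma psi_apply [simp]: "psi a b x = a * x\<^sup>2 + b"
  by (simp add: psi_def)

lemma psi_eq_iff: "psi a b = psi c d \<longleftrightarrow> a = c \<and> b = d"
proof
  assume "psi a b = psi c d"
  then have "psi a b 0 = psi c d 0" "psi a b 1 = psi c d 1" by auto
  then show "a = c \<and> b = d" by simp
qed simp

lemma psi_in_psi_set_iff: "psi a b \<in> psi_set A \<longleftrightarrow> (a, b) \<in> A"
  by (auto simp del: psi_apply simp: psi_eq_iff)

lemma psi_le_supfun: "(a, b) \<in> A \<Longrightarrow> ereal (psi a b x) \<le> supfun (psi_set A) x"
  unfolding supfun_def by (rule SUP_upper) (auto simp del: psi_apply)

lemma supfun_psi_set_le:
  "(\<And>a b. (a, b) \<in> A \<Longrightarrow> psi a b x \<le> c) \<Longrightarrow> supfun (psi_set A) x \<le> ereal c"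
  unfolding supfun_def by (rule SUP_least) auto

lemma supfun_even:
  assumes "\<And>h x. h \<in> H \<Longrightarrow> h (-x) = h x"
  shows "supfun H (-x) = supfun H x"
  unfolding supfun_def using assms by (intro SUP_cong) auto

lemma lsc_supfun:
  assumes "\<And>h. h \<in> H \<Longrightarrow> continuous_on UNIV h"
  shows "lsc (supfun H)"
  unfolding lsc_def
proof
  fix x
  show "supfun H x \<le> Liminf (at x) (supfun H)"
    unfolding supfun_def [of H x]
  proof (rule SUP_least)
    fix h assume h: "h \<in> H"
    have "(h \<longlongrightarrow> h x) (at x)"
      using assms [OF h] by (simp add: continuous_on_def)
    then have "((\<lambda>y. ereal (h y)) \<longlongrightarrow> ereal (h x)) (at x)"
      by (rule tendsto_ereal)
    then have "ereal (h x) = Liminf (at x) (\<lambda>y. ereal (h y))"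
      by (intro lim_imp_Liminf [symmetric]) simp_all
    also have "\<dots> \<le> Liminf (at x) (supfun H)"
      using h by (intro Liminf_mono always_eventually) (auto simp: supfun_def intro: SUP_upper)
    finally show "ereal (h x) \<le> Liminf (at x) (supfun H)" .
  qed
qed

lemma HH_even: "h \<in> HH \<Longrightarrow> h (-x) = h x"
  by (auto simp: HH_def)

lemma HH_continuous: "h \<in> HH \<Longrightarrow> continuous_on UNIV h"
  by (auto simp: HH_def psi_def intro!: continuous_intros)

lemma H_convex_fun_even_lsc:
  assumes "H_convex_fun f"
  shows "(\<forall>x. f (-x) = f x) \<and> lsc f"
proof -
  obtain H where "H \<subseteq> HH" "f = supfun H"
    using assms by (auto simp: H_convex_fun_def)
  then show ?thesis
    using supfun_even lsc_supfun HH_even HH_continuous by (metis subsetD)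
qed

lemma H_convex_set_psi_set_iff:
  "H_convex_set (psi_set A) \<longleftrightarrow>
     (\<forall>a b. (a, b) \<notin> A \<longrightarrow> (\<exists>x. supfun (psi_set A) x < ereal (psi a b x)))"
proof -
  have "HH - psi_set A = {psi a b | a b. (a, b) \<notin> A}"
    unfolding HH_def using psi_in_psi_set_iff by blast
  moreover have "psi_set A \<subseteq> HH"
    unfolding HH_def by blast
  ultimately show ?thesis
    unfolding H_convex_set_def by (simp del: psi_apply) blast
qed

definition psi_sublevel :: "real \<Rightarrow> ereal \<Rightarrow> (real \<times> real) set" where
  "psi_sublevel x c = {(a, b). ereal (psi a b x) \<le> c}"

lemma psi_sublevel_simps [simp]:
  "psi_sublevel x (ereal r) = {p. inner (x\<^sup>2, 1) p \<le> r}"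
  "psi_sublevel x \<infinity> = UNIV"
  "psi_sublevel x (-\<infinity>) = {}"
  by (auto simp: psi_sublevel_def mult.commute)

lemma closed_psi_sublevel: "closed (psi_sublevel x c)"
  by (cases c) (simp_all add: closed_halfspace_le)

lemma convex_psi_sublevel: "convex (psi_sublevel x c)"
  by (cases c) (simp_all add: convex_halfspace_le)

lemma psi_sublevel_minus_quadrant:
  "set_diff_minkowski (psi_sublevel x c) nonneg_quadrant \<subseteq> psi_sublevel x c"
proof
  fix p assume "p \<in> set_diff_minkowski (psi_sublevel x c) nonneg_quadrant"
  then obtain a b da db where p: "p = (a - da, b - db)" "ereal (a * x\<^sup>2 + b) \<le> c"
    and d: "da \<ge> 0" "db \<ge> 0"
    by (auto simp: set_diff_minkowski_def nonneg_quadrant_def psi_sublevel_def)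
  have "ereal ((a - da) * x\<^sup>2 + (b - db)) \<le> ereal (a * x\<^sup>2 + b)"
    using d by (simp add: algebra_simps)
  also have "\<dots> \<le> c" by (fact p(2))
  finally show "p \<in> psi_sublevel x c"
    using p(1) by (simp add: psi_sublevel_def)
qed

lemma set_diff_minkowski_INT_subset:
  assumes "\<And>i. set_diff_minkowski (S i) B \<subseteq> S i"
  shows "set_diff_minkowski (\<Inter>i. S i) B \<subseteq> (\<Inter>i. S i)"
  using assms unfolding set_diff_minkowski_def by blast

lemma H_convex_psi_set_eq_INT_sublevel:
  assumes "H_convex_set (psi_set A)"
  shows "A = (\<Inter>x. psi_sublevel x (supfun (psi_set A) x))"
proof
  show "A \<subseteq> (\<Inter>x. psi_sublevel x (supfun (psi_set A) x))"
    using psi_le_supfun by (auto simp: psi_sublevel_def)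
  show "(\<Inter>x. psi_sublevel x (supfun (psi_set A) x)) \<subseteq> A"
  proof
    fix p assume p: "p \<in> (\<Inter>x. psi_sublevel x (supfun (psi_set A) x))"
    obtain a b where "p = (a, b)" by (cases p)
    with p show "p \<in> A"
      using assms unfolding H_convex_set_psi_set_iff
      by (auto simp: psi_sublevel_def not_le [symmetric] simp del: psi_apply)
  qed
qed

lemma H_convex_psi_set_imp:
  assumes "H_convex_set (psi_set A)"
  shows "closed A \<and> convex A \<and> set_diff_minkowski A nonneg_quadrant \<subseteq> A"
proof -
  let ?S = "\<lambda>x. psi_sublevel x (supfun (psi_set A) x)"
  have "A = (\<Inter>x. ?S x)"
    using assms by (rule H_convex_psi_set_eq_INT_sublevel)
  moreover have "closed (\<Inter>x. ?S x)"
    by (simp add: closed_INT closed_psi_sublevel)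
  moreover have "convex (\<Inter>x. ?S x)"
    by (simp add: convex_INT convex_psi_sublevel)
  moreover have "set_diff_minkowski (\<Inter>x. ?S x) nonneg_quadrant \<subseteq> (\<Inter>x. ?S x)"
    by (rule set_diff_minkowski_INT_subset) (rule psi_sublevel_minus_quadrant)
  ultimately show ?thesis by simp
qed

lemma nonpos_if_bounded_on_nonneg:
  fixes k M :: real
  assumes "\<And>c. c \<ge> 0 \<Longrightarrow> k * c < M"
  shows "k \<le> 0"
proof (rule ccontr)
  assume "\<not> k \<le> 0"
  then have "k * ((\<bar>M\<bar> + 1) / k) = \<bar>M\<bar> + 1" and "(\<bar>M\<bar> + 1) / k \<ge> 0"
    by simp_all
  with assms show False by fastforce
qed

lemma separating_normal_nonneg:
  assumes "(a1, b1) \<in> A" and "set_diff_minkowski A nonneg_quadrant \<subseteq> A"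
    and "\<forall>(a, b) \<in> A. u * a + v * b < \<beta>"
  shows "u \<ge> 0 \<and> v \<ge> 0"
proof -
  have below: "(a1 - c, b1 - d) \<in> A" if "c \<ge> 0" "d \<ge> 0" for c d
  proof -
    have "(a1, b1) - (c, d) \<in> set_diff_minkowski A nonneg_quadrant"
      unfolding set_diff_minkowski_def nonneg_quadrant_def using assms(1) that by blast
    then show ?thesis using assms(2) by auto
  qed
  have "-u * c < \<beta> - u * a1 - v * b1" if "c \<ge> 0" for c
    using assms(3) below [OF that order_refl] by (auto simp: algebra_simps)
  moreover have "-v * d < \<beta> - u * a1 - v * b1" if "d \<ge> 0" for d
    using assms(3) below [OF order_refl that] by (auto simp: algebra_simps)
  ultimately show ?thesis
    using nonpos_if_bounded_on_nonneg by (metis neg_le_0_iff_le)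
qed

lemma separate_point_from_quadrant_stable_set:
  assumes "closed A" "convex A" "set_diff_minkowski A nonneg_quadrant \<subseteq> A"
    and "A \<noteq> {}" "(a0, b0) \<notin> A"
  obtains u v \<beta> where "u \<ge> 0" "v \<ge> 0" "\<beta> < u * a0 + v * b0"
    "\<forall>(a, b) \<in> A. u * a + v * b < \<beta>"
proof -
  obtain w \<gamma> where w: "inner w (a0, b0) < \<gamma>" "\<forall>p\<in>A. \<gamma> < inner w p"
    using separating_hyperplane_closed_point [OF assms(2,1,5)] by blast
  define u where "u = - fst w"
  define v where "v = - snd w"
  have sep: "\<forall>(a, b) \<in> A. u * a + v * b < - \<gamma>" "- \<gamma> < u * a0 + v * b0"
    using w by (force simp: u_def v_def inner_prod_def)+
  obtain a1 b1 where "(a1, b1) \<in> A" using assms(4) by auto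
  then have "u \<ge> 0 \<and> v \<ge> 0"
    using separating_normal_nonneg assms(3) sep(1) by blast
  then show ?thesis using that sep by blast
qed

lemma supfun_less_psi_at_sqrt_ratio:
  assumes "v > 0" "u \<ge> 0" "\<beta> < u * a0 + v * b0" "\<forall>(a, b) \<in> A. u * a + v * b < \<beta>"
  shows "supfun (psi_set A) (sqrt (u / v)) < ereal (psi a0 b0 (sqrt (u / v)))"
proof -
  have sq: "(sqrt (u / v))\<^sup>2 = u / v"
    using assms(1,2) by simp
  have scaled: "(u * a + v * b) / v = psi a b (sqrt (u / v))" for a b
    using assms(1) by (simp add: sq field_simps)
  have "supfun (psi_set A) (sqrt (u / v)) \<le> ereal (\<beta> / v)"
  proof (rule supfun_psi_set_le)
    fix a b assume "(a, b) \<in> A"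
    then have "(u * a + v * b) / v < \<beta> / v"
      using assms(1,4) by (auto intro: divide_strict_right_mono)
    then show "psi a b (sqrt (u / v)) \<le> \<beta> / v"
      by (simp only: scaled [symmetric])
  qed
  also have "\<beta> / v < psi a0 b0 (sqrt (u / v))"
    using divide_strict_right_mono [OF assms(3,1)] by (simp only: scaled)
  finally show ?thesis by simp
qed

lemma supfun_less_psi_if_slopes_bounded:
  assumes slopes: "\<forall>(a, b) \<in> A. a \<le> s" and "s < a0"
    and "supfun (psi_set A) x1 \<noteq> \<infinity>"
  shows "\<exists>x. supfun (psi_set A) x < ereal (psi a0 b0 x)"
proof -
  obtain M where "supfun (psi_set A) x1 \<le> ereal M"
    using assms(3) by (cases "supfun (psi_set A) x1") auto
  then have M: "a * x1\<^sup>2 + b \<le> M" if "(a, b) \<in> A" for a b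
    using psi_le_supfun [OF that, of x1] order_trans by fastforce
  define t1 where "t1 = x1\<^sup>2"
  \<comment> \<open>far enough out that the slope gap \<open>a0 - s\<close> beats the offset at \<open>x1\<close>\<close>
  define t where "t = t1 + (\<bar>M - a0 * t1 - b0\<bar> + 1) / (a0 - s)"
  have gap: "(a0 - s) * (t - t1) = \<bar>M - a0 * t1 - b0\<bar> + 1"
    using \<open>s < a0\<close> by (simp add: t_def)
  have "t \<ge> t1"
    using \<open>s < a0\<close> by (simp add: t_def)
  moreover have "t1 \<ge> 0"
    by (simp add: t1_def)
  ultimately have sq: "(sqrt t)\<^sup>2 = t"
    by simp
  have "supfun (psi_set A) (sqrt t) \<le> ereal (s * (t - t1) + M)"
  proof (rule supfun_psi_set_le)
    fix a b assume ab: "(a, b) \<in> A"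
    have "a * (t - t1) \<le> s * (t - t1)"
      using slopes ab \<open>t \<ge> t1\<close> by (auto intro: mult_right_mono)
    with M [OF ab] show "psi a b (sqrt t) \<le> s * (t - t1) + M"
      by (simp add: sq t1_def algebra_simps)
  qed
  also have "s * (t - t1) + M < psi a0 b0 (sqrt t)"
  proof -
    have "psi a0 b0 (sqrt t) - (s * (t - t1) + M) = (a0 - s) * (t - t1) + (a0 * t1 + b0 - M)"
      by (simp add: sq algebra_simps)
    then show ?thesis
      unfolding gap by linarith
  qed
  finally show ?thesis by auto
qed

lemma H_convex_psi_set_if:
  assumes "closed A" "convex A" "set_diff_minkowski A nonneg_quadrant \<subseteq> A"
    and finite: "\<exists>x. supfun (psi_set A) x \<noteq> \<infinity>"
  shows "H_convex_set (psi_set A)"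
  unfolding H_convex_set_psi_set_iff
proof (intro allI impI)
  fix a0 b0 assume notin: "(a0, b0) \<notin> A"
  show "\<exists>x. supfun (psi_set A) x < ereal (psi a0 b0 x)"
  proof (cases "A = {}")
    case True
    then show ?thesis by (simp add: supfun_def bot_ereal_def)
  next
    case False
    then obtain a1 b1 where ab1: "(a1, b1) \<in> A" by auto
    obtain u v \<beta> where uv: "u \<ge> 0" "v \<ge> 0" and sep: "\<beta> < u * a0 + v * b0"
      "\<forall>(a, b) \<in> A. u * a + v * b < \<beta>"
      using separate_point_from_quadrant_stable_set [OF assms(1-3) False notin] by blast
    show ?thesis
    proof (cases "v > 0")
      case True
      then show ?thesis
        using supfun_less_psi_at_sqrt_ratio uv sep by blast
    next
      case False
      then have "v = 0" using uv by simp
      moreover have "u > 0"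
        using sep ab1 \<open>v = 0\<close> uv by (cases "u = 0") auto
      ultimately have "\<forall>(a, b) \<in> A. a \<le> \<beta> / u" and "\<beta> / u < a0"
        using sep by (auto simp: field_simps)
      then show ?thesis
        using supfun_less_psi_if_slopes_bounded finite by blast
    qed
  qed
qed

theorem mainTheorem13:
  shows "(\<forall>f :: real \<Rightarrow> ereal. (\<forall>x. f x \<noteq> -\<infinity>) \<and> H_convex_fun f \<longrightarrow>
            (\<forall>x. f (-x) = f x) \<and> lsc f)
      \<and> (\<forall>(C :: (real \<Rightarrow> real) set) (A :: (real \<times> real) set).
            H_convex_set C \<and> C = {psi a b | a b. (a, b) \<in> A} \<longrightarrow>
            closed A \<and> convex A \<and> set_diff_minkowski A nonneg_quadrant \<subseteq> A)
      \<and> (\<forall>A :: (real \<times> real) set.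
            closed A \<and> convex A \<and> set_diff_minkowski A nonneg_quadrant \<subseteq> A \<and>
            (\<exists>x. supfun {psi a b | a b. (a, b) \<in> A} x \<noteq> \<infinity>) \<longrightarrow>
            H_convex_set {psi a b | a b. (a, b) \<in> A})"
  using H_convex_fun_even_lsc H_convex_psi_set_imp H_convex_psi_set_if by blast

end
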